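(* Let $G$ be a graph such that the subgraph $G_\Delta$ induced by the vertices of maximum degree $\Delta(G)$ is acyclic. Then for every integer $t>\Delta(G)$, any proper $t$-edge coloring of $G$ can be transformed into a proper $\Delta(G)$-edge coloring of $G$ by a sequence of interchanges.
   Context: All graphs are finite, without loops and multiple edges. $\Delta(G)$ is the maximum degree of $G$. A proper $t$-edge coloring of $G$ is a map $f:E(G)\to\{1,\dots,t\}$ with $f(e)\neq f(e')$ for adjacent edges $e,e'$; a proper $\Delta(G)$-edge coloring obtained in this way is one using only colors from $\{1,\dots,\Delta(G)\}$. For a proper edge coloring $f$ and colors $a,b$, $G_f(a,b)$ is the subgraph induced by the edges colored $a$ or $b$. An interchange (Kempe change) consists of swapping colors $a$ and $b$ on one connected component of $G_f(a,b)$. *)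

theory Defs
  imports Main
begin

definition simple_graph :: "'a set \<Rightarrow> 'a set set \<Rightarrow> bool" where
  "simple_graph V E \<longleftrightarrow> finite V \<and> (\<forall>e\<in>E. \<exists>u v. e = {u, v} \<and> u \<noteq> v \<and> u \<in> V \<and> v \<in> V)"

definition degree :: "'a set set \<Rightarrow> 'a \<Rightarrow> nat" where
  "degree E v = card {e \<in> E. v \<in> e}"

definition max_degree :: "'a set \<Rightarrow> 'a set set \<Rightarrow> nat" where
  "max_degree V E = Max (insert 0 (degree E ` V))"

definition max_deg_vertices :: "'a set \<Rightarrow> 'a set set \<Rightarrow> 'a set" where
  "max_deg_vertices V E = {v \<in> V. degree E v = max_degree V E}"

definition induced_edges :: "'a set set \<Rightarrow> 'a set \<Rightarrow> 'a set set" where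
  "induced_edges E W = {e \<in> E. e \<subseteq> W}"

definition acyclic_graph :: "'a set \<Rightarrow> 'a set set \<Rightarrow> bool" where
  "acyclic_graph W F \<longleftrightarrow>
     \<not> (\<exists>vs. length vs \<ge> 3 \<and> distinct vs \<and> set vs \<subseteq> W \<and>
            (\<forall>i < length vs - 1. {vs ! i, vs ! Suc i} \<in> F) \<and>
            {last vs, hd vs} \<in> F)"

definition proper_edge_coloring :: "'a set set \<Rightarrow> nat \<Rightarrow> ('a set \<Rightarrow> nat) \<Rightarrow> bool" where
  "proper_edge_coloring E t f \<longleftrightarrow>
     (\<forall>e\<in>E. f e \<in> {1..t}) \<and>
     (\<forall>e\<in>E. \<forall>e'\<in>E. e \<noteq> e' \<and> e \<inter> e' \<noteq> {} \<longrightarrow> f e \<noteq> f e')"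

definition two_colored_edges :: "'a set set \<Rightarrow> ('a set \<Rightarrow> nat) \<Rightarrow> nat \<Rightarrow> nat \<Rightarrow> 'a set set" where
  "two_colored_edges E f a b = {e \<in> E. f e = a \<or> f e = b}"

definition edge_adj :: "'a set set \<Rightarrow> 'a \<Rightarrow> 'a \<Rightarrow> bool" where
  "edge_adj F u w \<longleftrightarrow> {u, w} \<in> F"

definition component_edges :: "'a set set \<Rightarrow> 'a \<Rightarrow> 'a set set" where
  "component_edges F v = {e \<in> F. \<exists>u\<in>e. (edge_adj F)\<^sup>*\<^sup>* v u}"

definition interchange :: "'a set set \<Rightarrow> nat \<Rightarrow> ('a set \<Rightarrow> nat) \<Rightarrow> ('a set \<Rightarrow> nat) \<Rightarrow> bool" where
  "interchange E t f g \<longleftrightarrow>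
     (\<exists>a b v. a \<in> {1..t} \<and> b \<in> {1..t} \<and>
        (let K = component_edges (two_colored_edges E f a b) v in
          K \<noteq> {} \<and>
          g = (\<lambda>e. if e \<in> K then (if f e = a then b else a) else f e)))"

end

theory Submission
  imports Defs "HOL-Combinatorics.Transposition"
begin

text \<open>Call an edge high if its colour exceeds \<open>\<Delta>\<close>; it suffices to show that, as long as a
  high edge exists, interchanges can reduce the number of high edges. Take a high edge \<open>xy\<close>
  and grow a Vizing fan at \<open>x\<close>. Interchanges between two colours \<open>\<le> \<Delta>\<close> do not change the
  number of high edges, and neither does swapping a low with a high colour along a chain
  that ends in a high edge at a vertex missing the low colour. Vizing's argument then either
  recolours a high edge with a low colour, or reaches a fan vertex \<open>z\<close> missing no colour
  \<open>\<le> \<Delta>\<close>; such a \<open>z\<close> has maximum degree, and rotating the fan moves the high colour onto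
  \<open>xz\<close>. Repeating the argument at \<open>z\<close>, the high edge travels along a path in \<open>G\<^sub>\<Delta>\<close> that can
  never revisit a vertex, since \<open>G\<^sub>\<Delta>\<close> is acyclic; as \<open>G\<^sub>\<Delta>\<close> is finite, the number of high
  edges must eventually drop.\<close>

lemma sum_card_incident_edges:
  assumes "finite C" "finite K" and edges: "\<And>e. e \<in> K \<Longrightarrow> card e = 2 \<and> e \<subseteq> C"
  shows "(\<Sum>u\<in>C. card {e\<in>K. u \<in> e}) = 2 * card K"
proof -
  have "(\<Sum>u\<in>C. card {e\<in>K. u \<in> e}) = (\<Sum>u\<in>C. \<Sum>e\<in>K. if u \<in> e then 1 else 0)"
    using sum.inter_filter[OF assms(2), of "\<lambda>_. 1 :: nat"] by simp
  also have "\<dots> = (\<Sum>e\<in>K. \<Sum>u\<in>C. if u \<in> e then 1 else 0)"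
    by (rule sum.swap)
  also have "\<dots> = (\<Sum>e\<in>K. card e)"
  proof (rule sum.cong[OF refl])
    fix e assume "e \<in> K"
    have "(\<Sum>u\<in>C. if u \<in> e then 1 else 0) = card {u\<in>C. u \<in> e}"
      using sum.inter_filter[OF assms(1), of "\<lambda>_. 1 :: nat"] by simp
    also have "{u\<in>C. u \<in> e} = e"
      using edges \<open>e \<in> K\<close> by blast
    finally show "(\<Sum>u\<in>C. if u \<in> e then 1 else 0) = card e" .
  qed
  also have "\<dots> = 2 * card K"
    using edges by simp
  finally show ?thesis .
qed

lemma rtranclp_shortest_predecessor:
  assumes "R\<^sup>*\<^sup>* v u" "u \<noteq> v"
  obtains p where "R\<^sup>*\<^sup>* v p" "R p u" "(LEAST n. (R ^^ n) v p) < (LEAST n. (R ^^ n) v u)"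
proof -
  let ?dist = "\<lambda>u. LEAST n. (R ^^ n) v u"
  obtain n where "(R ^^ n) v u"
    using assms(1) by (auto simp: rtranclp_power)
  then have path: "(R ^^ ?dist u) v u"
    by (rule LeastI)
  have "?dist u \<noteq> 0"
  proof
    assume "?dist u = 0"
    with path assms(2) show False
      by simp
  qed
  then obtain k where k: "?dist u = Suc k"
    using not0_implies_Suc by blast
  with path obtain p where p: "(R ^^ k) v p" "R p u"
    by (auto elim: relpowp_Suc_E)
  moreover have "?dist p \<le> k"
    using p(1) by (rule Least_le)
  ultimately show ?thesis
    using that relpowp_imp_rtranclp k by fastforce
qed

text \<open>A connected graph on \<open>n\<close> vertices has at least \<open>n - 1\<close> edges: mapping every vertex
  other than \<open>v\<close> to the last edge of a shortest path from \<open>v\<close> is injective.\<close>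
lemma card_reachable_le_component_edges:
  assumes "finite F" "finite {u. (edge_adj F)\<^sup>*\<^sup>* v u}"
  shows "card {u. (edge_adj F)\<^sup>*\<^sup>* v u} \<le> card (component_edges F v) + 1"
proof -
  let ?R = "edge_adj F"
  let ?C = "{u. ?R\<^sup>*\<^sup>* v u}" and ?dist = "\<lambda>u. LEAST n. (?R ^^ n) v u"
  have "\<forall>u\<in>?C - {v}. \<exists>p. ?R\<^sup>*\<^sup>* v p \<and> ?R p u \<and> ?dist p < ?dist u"
  proof
    fix u assume "u \<in> ?C - {v}"
    then obtain p where "?R\<^sup>*\<^sup>* v p" "?R p u" "?dist p < ?dist u"
      by (auto elim: rtranclp_shortest_predecessor)
    then show "\<exists>p. ?R\<^sup>*\<^sup>* v p \<and> ?R p u \<and> ?dist p < ?dist u"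
      by blast
  qed
  then obtain par where par: "\<And>u. u \<in> ?C - {v} \<Longrightarrow>
      ?R\<^sup>*\<^sup>* v (par u) \<and> ?R (par u) u \<and> ?dist (par u) < ?dist u"
    using bchoice by meson
  have "inj_on (\<lambda>u. {par u, u}) (?C - {v})"
  proof (rule inj_onI)
    fix u w assume u: "u \<in> ?C - {v}" and w: "w \<in> ?C - {v}" and eq: "{par u, u} = {par w, w}"
    show "u = w"
    proof (rule ccontr)
      assume "u \<noteq> w"
      with eq have "u = par w" "w = par u" by (auto simp: doubleton_eq_iff)
      then show False
        using par[OF u] par[OF w] by (metis order.asym)
    qed
  qed
  moreover have "(\<lambda>u. {par u, u}) ` (?C - {v}) \<subseteq> component_edges F v"
  proof (rule image_subsetI)
    fix u assume "u \<in> ?C - {v}"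
    from par[OF this] show "{par u, u} \<in> component_edges F v"
      unfolding component_edges_def edge_adj_def by blast
  qed
  moreover have "finite (component_edges F v)"
    using assms(1) unfolding component_edges_def by simp
  ultimately have "card (?C - {v}) \<le> card (component_edges F v)"
    by (rule card_inj_on_le)
  moreover have "card ?C = Suc (card (?C - {v}))"
    by (rule card_Suc_Diff1[OF assms(2), symmetric]) simp
  ultimately show ?thesis
    by linarith
qed

lemma proper_edge_coloring_range:
  "proper_edge_coloring E t f \<Longrightarrow> e \<in> E \<Longrightarrow> f e \<in> {1..t}"
  unfolding proper_edge_coloring_def by blast

lemma proper_edge_coloring_eq_at_vertex:
  "proper_edge_coloring E t f \<Longrightarrow> e \<in> E \<Longrightarrow> e' \<in> E \<Longrightarrow> u \<in> e \<Longrightarrow> u \<in> e'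
    \<Longrightarrow> f e = f e' \<Longrightarrow> e = e'"
  unfolding proper_edge_coloring_def by (metis IntI empty_iff)

definition is_walk :: "'a set set \<Rightarrow> 'a list \<Rightarrow> bool" where
  "is_walk F ws \<longleftrightarrow> (\<forall>i < length ws - 1. {ws ! i, ws ! Suc i} \<in> F)"

lemma is_walk_snoc:
  assumes "is_walk F ws" "ws \<noteq> []" "{last ws, z} \<in> F"
  shows "is_walk F (ws @ [z])"
  unfolding is_walk_def
proof (intro allI impI)
  fix i assume "i < length (ws @ [z]) - 1"
  then consider "i < length ws - 1" | "i = length ws - 1"
    by fastforce
  then show "{(ws @ [z]) ! i, (ws @ [z]) ! Suc i} \<in> F"
  proof cases
    case 1
    then have "Suc i < length ws"
      by simp
    with 1 show ?thesis
      using assms(1) unfolding is_walk_def by (simp add: nth_append)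
  next
    case 2
    then show ?thesis
      using assms(2,3) by (simp add: nth_append last_conv_nth)
  qed
qed

lemma is_walk_drop: "is_walk F ws \<Longrightarrow> is_walk F (drop i ws)"
  unfolding is_walk_def by (simp add: add.commute less_diff_conv)

lemma acyclic_walk_extension:
  assumes acyclic: "acyclic_graph W F" and ws: "distinct ws" "set ws \<subseteq> W" "is_walk F ws"
    and z: "{last ws, z} \<in> F" "z \<noteq> last ws" "butlast ws \<noteq> [] \<Longrightarrow> z \<noteq> last (butlast ws)"
  shows "z \<notin> set ws"
proof
  assume "z \<in> set ws"
  then obtain i where i: "i < length ws" "ws ! i = z"
    by (metis in_set_conv_nth)
  then have ne: "ws \<noteq> []"
    by auto
  have last: "i \<noteq> length ws - 1"
    using i z(2) ne by (auto simp: last_conv_nth)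
  moreover have "i \<noteq> length ws - 2"
  proof
    assume i2: "i = length ws - 2"
    with i(1) last have "2 \<le> length ws"
      by linarith
    then have bl: "butlast ws \<noteq> []"
      by (cases ws rule: rev_cases) auto
    then have "last (butlast ws) = ws ! i"
      using i2 \<open>2 \<le> length ws\<close> nth_butlast[of "length ws - 2" ws] last_conv_nth[OF bl]
      by (simp add: numeral_2_eq_2)
    with i(2) z(3)[OF bl] show False
      by simp
  qed
  ultimately have "3 \<le> length (drop i ws)"
    using i(1) by simp
  moreover have "hd (drop i ws) = z" "last (drop i ws) = last ws"
    using i by (simp_all add: hd_drop_conv_nth)
  ultimately show False
    using acyclic ws z(1) is_walk_drop[OF ws(3), of i] set_drop_subset[of i ws]
    unfolding acyclic_graph_def is_walk_def by (metis distinct_drop order_trans)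
qed

locale finite_simple_graph =
  fixes V :: "'a set" and E :: "'a set set"
  assumes simple: "simple_graph V E"
begin

abbreviation \<Delta> :: nat where
  "\<Delta> \<equiv> max_degree V E"

lemma finite_V: "finite V"
  using simple by (simp add: simple_graph_def)

lemma edgeE:
  assumes "e \<in> E"
  obtains u w where "e = {u, w}" "u \<noteq> w" "u \<in> V" "w \<in> V"
  using simple assms unfolding simple_graph_def by blast

lemma edge_at_vertexE:
  assumes "e \<in> E" "x \<in> e"
  obtains z where "e = {x, z}" "z \<noteq> x"
  using assms by (elim edgeE) auto

lemma finite_E: "finite E"
proof -
  have "E \<subseteq> Pow V"
    by (blast elim: edgeE)
  then show ?thesis
    using finite_V by (meson finite_Pow_iff finite_subset)
qed

lemma vertex_of_edge: "e \<in> E \<Longrightarrow> u \<in> e \<Longrightarrow> u \<in> V"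
  by (blast elim: edgeE)

lemma card_edge: "e \<in> E \<Longrightarrow> card e = 2"
  by (auto elim: edgeE)

lemma edge_ends_neq: "{u, w} \<in> E \<Longrightarrow> u \<noteq> w"
  using card_edge by fastforce

lemma degree_le_max_degree: "u \<in> V \<Longrightarrow> degree E u \<le> \<Delta>"
  unfolding max_degree_def using finite_V by (intro Max_ge) auto

definition kempe_vertices :: "('a set \<Rightarrow> nat) \<Rightarrow> nat \<Rightarrow> nat \<Rightarrow> 'a \<Rightarrow> 'a set" where
  "kempe_vertices f a b v = {u. (edge_adj (two_colored_edges E f a b))\<^sup>*\<^sup>* v u}"

definition kempe_edges :: "('a set \<Rightarrow> nat) \<Rightarrow> nat \<Rightarrow> nat \<Rightarrow> 'a \<Rightarrow> 'a set set" where
  "kempe_edges f a b v = component_edges (two_colored_edges E f a b) v"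

definition kempe_swap :: "('a set \<Rightarrow> nat) \<Rightarrow> nat \<Rightarrow> nat \<Rightarrow> 'a \<Rightarrow> 'a set \<Rightarrow> nat" where
  "kempe_swap f a b v e = (if e \<in> kempe_edges f a b v then transpose a b (f e) else f e)"

lemma kempe_edges_iff:
  "e \<in> kempe_edges f a b v \<longleftrightarrow>
     e \<in> E \<and> (f e = a \<or> f e = b) \<and> (\<exists>u\<in>e. u \<in> kempe_vertices f a b v)"
  unfolding kempe_edges_def kempe_vertices_def component_edges_def two_colored_edges_def
  by auto

lemma kempe_edgesD: "e \<in> kempe_edges f a b v \<Longrightarrow> e \<in> E \<and> (f e = a \<or> f e = b)"
  unfolding kempe_edges_iff by blast

lemma start_in_kempe_vertices: "v \<in> kempe_vertices f a b v"
  unfolding kempe_vertices_def by simp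

lemma kempe_vertices_step:
  "u \<in> kempe_vertices f a b v \<Longrightarrow> {u, w} \<in> E \<Longrightarrow> f {u, w} = a \<or> f {u, w} = b
    \<Longrightarrow> w \<in> kempe_vertices f a b v"
  unfolding kempe_vertices_def edge_adj_def two_colored_edges_def
  by (simp add: rtranclp.rtrancl_into_rtrancl)

lemma edge_at_start_in_kempe_edges:
  "{v, w} \<in> E \<Longrightarrow> f {v, w} = a \<or> f {v, w} = b \<Longrightarrow> {v, w} \<in> kempe_edges f a b v"
  unfolding kempe_edges_iff using start_in_kempe_vertices by blast

lemma kempe_edge_subset_vertices:
  assumes "e \<in> kempe_edges f a b v"
  shows "e \<subseteq> kempe_vertices f a b v"
proof -
  from assms obtain u where u: "u \<in> e" "u \<in> kempe_vertices f a b v"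
    and e: "e \<in> E" "f e = a \<or> f e = b"
    unfolding kempe_edges_iff by blast
  then obtain w where "e = {u, w}"
    by (elim edge_at_vertexE)
  with u e show ?thesis
    using kempe_vertices_step by blast
qed

lemma kempe_vertices_subset: "kempe_vertices f a b v \<subseteq> insert v V"
proof
  fix u assume "u \<in> kempe_vertices f a b v"
  then have "(edge_adj (two_colored_edges E f a b))\<^sup>*\<^sup>* v u"
    unfolding kempe_vertices_def by simp
  then show "u \<in> insert v V"
    by induction (auto simp: edge_adj_def two_colored_edges_def intro: vertex_of_edge)
qed

lemma finite_kempe_vertices: "finite (kempe_vertices f a b v)"
  using finite_subset[OF kempe_vertices_subset] finite_V by simp

lemma kempe_edges_subset: "kempe_edges f a b v \<subseteq> E"
  using kempe_edgesD by blast

lemma finite_kempe_edges: "finite (kempe_edges f a b v)"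
  using finite_subset[OF kempe_edges_subset finite_E] .

lemma kempe_vertex_in_kempe_edge:
  assumes "u \<in> kempe_vertices f a b v" "u \<noteq> v"
  shows "\<exists>e\<in>kempe_edges f a b v. u \<in> e"
proof -
  let ?R = "edge_adj (two_colored_edges E f a b)"
  from assms obtain p where "?R\<^sup>*\<^sup>* v p" "?R p u"
    unfolding kempe_vertices_def by (auto elim: rtranclp.cases)
  then have "{p, u} \<in> kempe_edges f a b v"
    unfolding kempe_edges_def component_edges_def edge_adj_def by blast
  then show ?thesis
    by blast
qed

lemma kempe_swap_outside: "e \<notin> kempe_edges f a b v \<Longrightarrow> kempe_swap f a b v e = f e"
  unfolding kempe_swap_def by simp

lemma kempe_swap_inside:
  "e \<in> kempe_edges f a b v \<Longrightarrow> kempe_swap f a b v e = transpose a b (f e)"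
  unfolding kempe_swap_def by simp

lemma kempe_swap_eq_other_colour:
  assumes "c \<noteq> a" "c \<noteq> b"
  shows "kempe_swap f a b v e = c \<longleftrightarrow> f e = c"
  using assms kempe_edgesD[of e f a b v]
  by (cases "e \<in> kempe_edges f a b v") (auto simp: kempe_swap_def)

lemma kempe_swap_off_vertices:
  "u \<notin> kempe_vertices f a b v \<Longrightarrow> u \<in> e \<Longrightarrow> kempe_swap f a b v e = f e"
  using kempe_edge_subset_vertices kempe_swap_outside by blast

text \<open>Edges at the vertex with colours other than \<open>a\<close>, \<open>b\<close> lie outside the chain, but are
  fixed by the transposition anyway.\<close>
lemma kempe_swap_at_vertex:
  assumes "u \<in> kempe_vertices f a b v" "u \<in> e" "e \<in> E"
  shows "kempe_swap f a b v e = transpose a b (f e)"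
proof (cases "f e = a \<or> f e = b")
  case True
  with assms have "e \<in> kempe_edges f a b v"
    unfolding kempe_edges_iff by blast
  then show ?thesis
    by (rule kempe_swap_inside)
next
  case False
  then show ?thesis
    using kempe_edgesD kempe_swap_outside by fastforce
qed

lemma interchange_kempe_swap:
  assumes "a \<in> {1..t}" "b \<in> {1..t}" "kempe_edges f a b v \<noteq> {}"
  shows "interchange E t f (kempe_swap f a b v)"
proof -
  have "kempe_swap f a b v =
      (\<lambda>e. if e \<in> kempe_edges f a b v then (if f e = a then b else a) else f e)"
    using kempe_edgesD by (fastforce simp: kempe_swap_def transpose_def)
  with assms show ?thesis
    unfolding interchange_def kempe_edges_def Let_def by blast
qed

lemma proper_kempe_swap:
  assumes proper: "proper_edge_coloring E t f" and "a \<in> {1..t}" "b \<in> {1..t}"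
  shows "proper_edge_coloring E t (kempe_swap f a b v)"
  unfolding proper_edge_coloring_def
proof (intro conjI ballI impI)
  fix e assume "e \<in> E"
  then show "kempe_swap f a b v e \<in> {1..t}"
    using assms proper_edge_coloring_range[OF proper]
    by (auto simp: kempe_swap_def transpose_def)
next
  fix e e' assume e: "e \<in> E" and e': "e' \<in> E" and "e \<noteq> e' \<and> e \<inter> e' \<noteq> {}"
  then obtain u where u: "u \<in> e" "u \<in> e'" and neq: "f e \<noteq> f e'"
    using proper_edge_coloring_eq_at_vertex[OF proper e e'] by blast
  show "kempe_swap f a b v e \<noteq> kempe_swap f a b v e'"
  proof (cases "u \<in> kempe_vertices f a b v")
    case True
    then show ?thesis
      using kempe_swap_at_vertex[OF True u(1) e] kempe_swap_at_vertex[OF True u(2) e'] neq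
      by (auto dest: transpose_eq_imp_eq)
  next
    case False
    then show ?thesis
      using kempe_swap_off_vertices[OF False] u neq by simp
  qed
qed

lemma card_kempe_vertices_le: "card (kempe_vertices f a b v) \<le> card (kempe_edges f a b v) + 1"
proof -
  have "finite (two_colored_edges E f a b)"
    using finite_E unfolding two_colored_edges_def by simp
  from card_reachable_le_component_edges[OF this] show ?thesis
    using finite_kempe_vertices unfolding kempe_vertices_def kempe_edges_def by blast
qed

lemma inj_on_edges_at_vertex:
  assumes "proper_edge_coloring E t f"
  shows "inj_on f {e\<in>E. u \<in> e}"
proof (rule inj_onI)
  fix e e' assume "e \<in> {e\<in>E. u \<in> e}" "e' \<in> {e\<in>E. u \<in> e}" "f e = f e'"
  then show "e = e'"
    by (intro proper_edge_coloring_eq_at_vertex[OF assms, of e e' u]) auto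
qed

lemma card_edges_at_vertex_le_card_colours:
  assumes "proper_edge_coloring E t f" "S \<subseteq> E" "f ` {e\<in>S. u \<in> e} \<subseteq> A" "finite A"
  shows "card {e\<in>S. u \<in> e} \<le> card A"
proof -
  have "inj_on f {e\<in>S. u \<in> e}"
    by (rule inj_on_subset[OF inj_on_edges_at_vertex[OF assms(1)]]) (use assms(2) in auto)
  then have "card {e\<in>S. u \<in> e} = card (f ` {e\<in>S. u \<in> e})"
    by (simp add: card_image)
  also have "\<dots> \<le> card A"
    using assms(3,4) by (rule card_mono[rotated])
  finally show ?thesis .
qed

lemma kempe_degree_le_2:
  assumes "proper_edge_coloring E t f"
  shows "card {e\<in>kempe_edges f a b v. u \<in> e} \<le> 2"
proof -
  have "card {e\<in>kempe_edges f a b v. u \<in> e} \<le> card {a, b}"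
    by (intro card_edges_at_vertex_le_card_colours[OF assms]) (auto dest: kempe_edgesD)
  also have "\<dots> \<le> 2"
    by (simp add: card_insert_le_m1)
  finally show ?thesis .
qed

lemma sum_kempe_degrees:
  assumes "S \<subseteq> kempe_edges f a b v"
  shows "(\<Sum>u\<in>kempe_vertices f a b v. card {e\<in>S. u \<in> e}) = 2 * card S"
proof (rule sum_card_incident_edges[OF finite_kempe_vertices])
  show "finite S"
    using finite_subset[OF assms finite_kempe_edges] .
  show "card e = 2 \<and> e \<subseteq> kempe_vertices f a b v" if "e \<in> S" for e
    using assms that card_edge kempe_edges_subset kempe_edge_subset_vertices by blast
qed

text \<open>By the handshake lemma and connectedness, \<open>\<Sum> (2 - deg) = 2 |C| - 2 |K| \<le> 2\<close>.\<close>
lemma sum_kempe_deficiency_le_2: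
  assumes "proper_edge_coloring E t f"
  shows "(\<Sum>u\<in>kempe_vertices f a b v. 2 - card {e\<in>kempe_edges f a b v. u \<in> e}) \<le> 2"
proof -
  let ?C = "kempe_vertices f a b v" and ?K = "kempe_edges f a b v"
  let ?d = "\<lambda>u. card {e\<in>?K. u \<in> e}"
  have "(\<Sum>u\<in>?C. 2 - ?d u) + (\<Sum>u\<in>?C. ?d u) = (\<Sum>u\<in>?C. 2)"
    using kempe_degree_le_2[OF assms] by (simp add: sum.distrib[symmetric])
  moreover have "(\<Sum>u\<in>?C. ?d u) = 2 * card ?K"
    by (rule sum_kempe_degrees) simp
  ultimately show ?thesis
    using card_kempe_vertices_le[of f a b v] by simp
qed

lemma kempe_chain_at_most_two_ends:
  assumes "proper_edge_coloring E t f"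
    and "u\<^sub>1 \<in> kempe_vertices f a b v" "u\<^sub>2 \<in> kempe_vertices f a b v" "u\<^sub>3 \<in> kempe_vertices f a b v"
    and "u\<^sub>1 \<noteq> u\<^sub>2" "u\<^sub>1 \<noteq> u\<^sub>3" "u\<^sub>2 \<noteq> u\<^sub>3"
    and "card {e\<in>kempe_edges f a b v. u\<^sub>1 \<in> e} = 1" "card {e\<in>kempe_edges f a b v. u\<^sub>2 \<in> e} = 1"
      "card {e\<in>kempe_edges f a b v. u\<^sub>3 \<in> e} = 1"
  shows False
proof -
  let ?s = "\<lambda>u. 2 - card {e\<in>kempe_edges f a b v. u \<in> e}"
  have "(\<Sum>u\<in>{u\<^sub>1, u\<^sub>2, u\<^sub>3}. ?s u) \<le> (\<Sum>u\<in>kempe_vertices f a b v. ?s u)"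
    using assms(2-4) finite_kempe_vertices by (intro sum_mono2) auto
  also have "\<dots> \<le> 2"
    by (rule sum_kempe_deficiency_le_2[OF assms(1)])
  finally show False
    using assms(5-10) by simp
qed

lemma kempe_degree_eq_1:
  assumes "proper_edge_coloring E t f" "e\<^sub>0 \<in> kempe_edges f a b v" "u \<in> e\<^sub>0"
    and "(\<nexists>e. e \<in> E \<and> u \<in> e \<and> f e = a) \<or> (\<nexists>e. e \<in> E \<and> u \<in> e \<and> f e = b)"
  shows "card {e\<in>kempe_edges f a b v. u \<in> e} = 1"
proof -
  have "card {e\<in>kempe_edges f a b v. u \<in> e} \<le> card {f e\<^sub>0}"
    using assms(2-4)
    by (intro card_edges_at_vertex_le_card_colours[OF assms(1) kempe_edges_subset])
      (auto dest: kempe_edgesD)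
  moreover have "{e\<in>kempe_edges f a b v. u \<in> e} \<noteq> {}"
    using assms(2,3) by blast
  ultimately show ?thesis
    using finite_kempe_edges[of f a b v] by (simp add: le_Suc_eq card_0_eq) blast
qed

definition missing :: "('a set \<Rightarrow> nat) \<Rightarrow> 'a \<Rightarrow> nat set" where
  "missing f u = {d\<in>{1..\<Delta>}. \<nexists>e. e \<in> E \<and> u \<in> e \<and> f e = d}"

lemma missing_iff: "d \<in> missing f u \<longleftrightarrow> d \<in> {1..\<Delta>} \<and> (\<nexists>e. e \<in> E \<and> u \<in> e \<and> f e = d)"
  unfolding missing_def by simp

lemma missing_neq_colour: "d \<in> missing f u \<Longrightarrow> e \<in> E \<Longrightarrow> u \<in> e \<Longrightarrow> f e \<noteq> d"
  unfolding missing_iff by blast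

lemma max_degree_le_if_none_missing:
  assumes "missing f u = {}"
  shows "\<Delta> \<le> card {e\<in>E. u \<in> e \<and> f e \<le> \<Delta>}"
proof -
  have "{1..\<Delta>} \<subseteq> f ` {e\<in>E. u \<in> e \<and> f e \<le> \<Delta>}"
  proof
    fix d assume d: "d \<in> {1..\<Delta>}"
    moreover have "d \<notin> missing f u"
      using assms by simp
    ultimately obtain e where "e \<in> E" "u \<in> e" "f e = d"
      unfolding missing_iff by blast
    with d show "d \<in> f ` {e\<in>E. u \<in> e \<and> f e \<le> \<Delta>}"
      by (intro rev_image_eqI[of e]) auto
  qed
  then have "card {1..\<Delta>} \<le> card (f ` {e\<in>E. u \<in> e \<and> f e \<le> \<Delta>})"
    by (rule card_mono[rotated]) (use finite_E in simp)
  then have "\<Delta> \<le> card (f ` {e\<in>E. u \<in> e \<and> f e \<le> \<Delta>})"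
    by simp
  also have "\<dots> \<le> card {e\<in>E. u \<in> e \<and> f e \<le> \<Delta>}"
    using finite_E by (simp add: card_image_le)
  finally show ?thesis .
qed

lemma missing_nonempty_at_high_edge:
  assumes "e \<in> E" "u \<in> e" "\<Delta> < f e"
  shows "missing f u \<noteq> {}"
proof
  assume "missing f u = {}"
  then have "\<Delta> \<le> card {e\<in>E. u \<in> e \<and> f e \<le> \<Delta>}"
    by (rule max_degree_le_if_none_missing)
  also have "\<dots> < card {e\<in>E. u \<in> e}"
  proof (rule psubset_card_mono)
    show "finite {e\<in>E. u \<in> e}"
      using finite_E by simp
    have "e \<in> {e\<in>E. u \<in> e}" "e \<notin> {e\<in>E. u \<in> e \<and> f e \<le> \<Delta>}"
      using assms by auto
    then show "{e\<in>E. u \<in> e \<and> f e \<le> \<Delta>} \<subset> {e\<in>E. u \<in> e}"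
      by blast
  qed
  also have "\<dots> = degree E u"
    unfolding degree_def ..
  also have "\<dots> \<le> \<Delta>"
    using assms by (intro degree_le_max_degree vertex_of_edge)
  finally show False
    by simp
qed

lemma degree_eq_max_degree_if_none_missing:
  assumes "u \<in> V" "missing f u = {}"
  shows "degree E u = \<Delta>"
proof -
  have "\<Delta> \<le> card {e\<in>E. u \<in> e \<and> f e \<le> \<Delta>}"
    using assms(2) by (rule max_degree_le_if_none_missing)
  also have "\<dots> \<le> degree E u"
    unfolding degree_def using finite_E by (intro card_mono) auto
  finally show ?thesis
    using degree_le_max_degree[OF assms(1)] by simp
qed

lemma missing_kempe_swap_off_vertices:
  "u \<notin> kempe_vertices f a b v \<Longrightarrow> missing (kempe_swap f a b v) u = missing f u"
  unfolding missing_def using kempe_swap_off_vertices by metis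

lemma missing_kempe_swap_other_colour:
  "d \<noteq> a \<Longrightarrow> d \<noteq> b \<Longrightarrow> d \<in> missing (kempe_swap f a b v) u \<longleftrightarrow> d \<in> missing f u"
  unfolding missing_def using kempe_swap_eq_other_colour by simp

lemma missing_kempe_swap_at_vertex:
  assumes "u \<in> kempe_vertices f a b v" "d \<in> {1..\<Delta>}" "transpose a b d \<in> {1..\<Delta>}"
  shows "d \<in> missing (kempe_swap f a b v) u \<longleftrightarrow> transpose a b d \<in> missing f u"
proof -
  have "kempe_swap f a b v e = d \<longleftrightarrow> f e = transpose a b d" if "e \<in> E" "u \<in> e" for e
    using kempe_swap_at_vertex[OF assms(1) that(2,1)] transpose_involutory by metis
  with assms(2,3) show ?thesis
    unfolding missing_def by auto
qed

definition num_high_edges :: "('a set \<Rightarrow> nat) \<Rightarrow> nat" where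
  "num_high_edges f = card {e\<in>E. \<Delta> < f e}"

lemma num_high_edges_kempe_swap_low:
  assumes "a \<le> \<Delta>" "b \<le> \<Delta>"
  shows "num_high_edges (kempe_swap f a b v) = num_high_edges f"
proof -
  have "\<Delta> < kempe_swap f a b v e \<longleftrightarrow> \<Delta> < f e" for e
    using assms by (auto simp: kempe_swap_def dest: kempe_edgesD)
  then show ?thesis
    unfolding num_high_edges_def by simp
qed

lemma num_high_edges_kempe_swap_balance:
  assumes "a \<le> \<Delta>" "\<Delta> < b"
  shows "num_high_edges (kempe_swap f a b v) + card {e\<in>kempe_edges f a b v. f e = b}
    = num_high_edges f + card {e\<in>kempe_edges f a b v. f e = a}"
proof -
  let ?K = "kempe_edges f a b v" and ?A = "{e\<in>E - kempe_edges f a b v. \<Delta> < f e}"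
  have fin: "finite ?A" "finite {e\<in>?K. f e = a}" "finite {e\<in>?K. f e = b}"
    using finite_E finite_kempe_edges by simp_all
  have "{e\<in>E. \<Delta> < kempe_swap f a b v e} = ?A \<union> {e\<in>?K. f e = a}"
    using assms by (auto simp: kempe_swap_def dest: kempe_edgesD)
  moreover have "?A \<inter> {e\<in>?K. f e = a} = {}"
    by blast
  ultimately have swapped: "num_high_edges (kempe_swap f a b v) = card ?A + card {e\<in>?K. f e = a}"
    unfolding num_high_edges_def using card_Un_disjoint[OF fin(1,2)] by simp
  have "{e\<in>E. \<Delta> < f e} = ?A \<union> {e\<in>?K. f e = b}"
    using assms by (auto dest: kempe_edgesD)
  moreover have "?A \<inter> {e\<in>?K. f e = b} = {}"
    by blast
  ultimately have "num_high_edges f = card ?A + card {e\<in>?K. f e = b}"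
    unfolding num_high_edges_def using card_Un_disjoint[OF fin(1,3)] by simp
  with swapped show ?thesis
    by simp
qed

lemma kempe_degree_split:
  assumes "a \<noteq> b"
  shows "card {e\<in>kempe_edges f a b v. u \<in> e}
    = card {e\<in>{e\<in>kempe_edges f a b v. f e = a}. u \<in> e} + card {e\<in>{e\<in>kempe_edges f a b v. f e = b}. u \<in> e}"
proof -
  let ?K = "kempe_edges f a b v"
  have "{e\<in>?K. u \<in> e} = {e\<in>{e\<in>?K. f e = a}. u \<in> e} \<union> {e\<in>{e\<in>?K. f e = b}. u \<in> e}"
    by (auto dest: kempe_edgesD)
  moreover have "{e\<in>{e\<in>?K. f e = a}. u \<in> e} \<inter> {e\<in>{e\<in>?K. f e = b}. u \<in> e} = {}"
    using assms by auto
  ultimately show ?thesis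
    using finite_kempe_edges[of f a b v] by (simp add: card_Un_disjoint)
qed

text \<open>A chain ending at \<open>u\<^sub>0\<close> with a \<open>b\<close>-edge has at least as many \<open>b\<close>-edges as
  \<open>a\<close>-edges: at every vertex \<open>deg\<^sub>a \<le> deg\<^sub>b + (2 - deg)\<close>, with one unit to spare at \<open>u\<^sub>0\<close>,
  and the total deficiency \<open>\<Sum> (2 - deg)\<close> is at most \<open>2\<close>.\<close>
lemma card_kempe_colour_class_le:
  assumes proper: "proper_edge_coloring E t f" and "a \<noteq> b"
    and u\<^sub>0: "u\<^sub>0 \<in> kempe_vertices f a b v" "\<nexists>e. e \<in> E \<and> u\<^sub>0 \<in> e \<and> f e = a"
    and e\<^sub>1: "e\<^sub>1 \<in> E" "u\<^sub>0 \<in> e\<^sub>1" "f e\<^sub>1 = b"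
  shows "card {e\<in>kempe_edges f a b v. f e = a} \<le> card {e\<in>kempe_edges f a b v. f e = b}"
proof -
  let ?C = "kempe_vertices f a b v" and ?K = "kempe_edges f a b v"
  let ?da = "\<lambda>u. card {e\<in>{e\<in>?K. f e = a}. u \<in> e}"
  let ?db = "\<lambda>u. card {e\<in>{e\<in>?K. f e = b}. u \<in> e}"
  let ?s = "\<lambda>u. 2 - card {e\<in>?K. u \<in> e}"
  note deg = kempe_degree_split[OF \<open>a \<noteq> b\<close>, of f v]
  have one: "?da u \<le> card {a}" "?db u \<le> card {b}" for u
    using kempe_edges_subset
    by (intro card_edges_at_vertex_le_card_colours[OF proper]; force)+
  have le: "?da u \<le> ?db u + ?s u" for u
    using deg[of u] one(1)[of u] by simp
  have "e\<^sub>1 \<in> ?K"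
    unfolding kempe_edges_iff using e\<^sub>1 u\<^sub>0(1) by (intro conjI bexI[of _ u\<^sub>0]) simp_all
  then have "?db u\<^sub>0 \<noteq> 0"
    using e\<^sub>1 finite_kempe_edges[of f a b v] by auto
  then have db0: "?db u\<^sub>0 = 1"
    using one(2)[of u\<^sub>0] by simp
  have "{e\<in>{e\<in>?K. f e = a}. u\<^sub>0 \<in> e} = {}"
    using u\<^sub>0(2) kempe_edges_subset by blast
  then have da0: "?da u\<^sub>0 = 0"
    by (metis card.empty)
  note remove = sum.remove[OF finite_kempe_vertices u\<^sub>0(1)]
  have "(\<Sum>u\<in>?C. ?da u) = (\<Sum>u\<in>?C - {u\<^sub>0}. ?da u)"
    using remove[of ?da] da0 by simp
  moreover have "\<dots> \<le> (\<Sum>u\<in>?C - {u\<^sub>0}. ?db u) + (\<Sum>u\<in>?C - {u\<^sub>0}. ?s u)"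
    using le by (simp add: sum.distrib[symmetric] sum_mono)
  moreover have "(\<Sum>u\<in>?C. ?db u) = (\<Sum>u\<in>?C - {u\<^sub>0}. ?db u) + 1"
    using remove[of ?db] db0 by simp
  moreover have "(\<Sum>u\<in>?C. ?s u) = (\<Sum>u\<in>?C - {u\<^sub>0}. ?s u) + 1"
    using remove[of ?s] deg[of u\<^sub>0] da0 db0 by simp
  ultimately have "(\<Sum>u\<in>?C. ?da u) \<le> (\<Sum>u\<in>?C. ?db u)"
    using sum_kempe_deficiency_le_2[OF proper, of a b v] by linarith
  then show ?thesis
    using sum_kempe_degrees[of "{e\<in>?K. f e = a}" f a b v]
      sum_kempe_degrees[of "{e\<in>?K. f e = b}" f a b v] by simp
qed

lemma num_high_edges_kempe_swap_le:
  assumes "proper_edge_coloring E t f" "a \<le> \<Delta>" "\<Delta> < b"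
    and "u\<^sub>0 \<in> kempe_vertices f a b v" "\<nexists>e. e \<in> E \<and> u\<^sub>0 \<in> e \<and> f e = a"
    and "e\<^sub>1 \<in> E" "u\<^sub>0 \<in> e\<^sub>1" "f e\<^sub>1 = b"
  shows "num_high_edges (kempe_swap f a b v) \<le> num_high_edges f"
  using card_kempe_colour_class_le[OF assms(1) _ assms(4-8)] assms(2,3)
    num_high_edges_kempe_swap_balance[OF assms(2,3), of f v] by simp

lemma kempe_edges_single_edge:
  assumes xw: "{x, w} \<in> E" "f {x, w} = a \<or> f {x, w} = b"
    and only: "\<And>e. e \<in> E \<Longrightarrow> x \<in> e \<or> w \<in> e \<Longrightarrow> f e = a \<or> f e = b \<Longrightarrow> e = {x, w}"
  shows "kempe_edges f a b x = {{x, w}}"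
proof -
  have "kempe_vertices f a b x \<subseteq> {x, w}"
  proof
    fix u assume "u \<in> kempe_vertices f a b x"
    then have "(edge_adj (two_colored_edges E f a b))\<^sup>*\<^sup>* x u"
      unfolding kempe_vertices_def by simp
    then show "u \<in> {x, w}"
    proof induction
      case (step y z)
      then have "{y, z} = {x, w}"
        using only unfolding edge_adj_def two_colored_edges_def by auto
      then show ?case
        by auto
    qed simp
  qed
  then have "e \<in> kempe_edges f a b x \<Longrightarrow> e = {x, w}" for e
    using only unfolding kempe_edges_iff by blast
  moreover have "{x, w} \<in> kempe_edges f a b x"
    using xw by (rule edge_at_start_in_kempe_edges)
  ultimately show ?thesis
    by blast
qed

end

locale recolouring = finite_simple_graph V E for V :: "'a set" and E :: "'a set set" +
  fixes t :: nat
  assumes max_degree_less: "max_degree V E < t"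
begin

abbreviation proper :: "('a set \<Rightarrow> nat) \<Rightarrow> bool" where
  "proper f \<equiv> proper_edge_coloring E t f"

abbreviation kempe_reachable :: "('a set \<Rightarrow> nat) \<Rightarrow> ('a set \<Rightarrow> nat) \<Rightarrow> bool" where
  "kempe_reachable \<equiv> (interchange E t)\<^sup>*\<^sup>*"

lemma low_colour_in_palette: "d \<in> {1..\<Delta>} \<Longrightarrow> d \<in> {1..t}"
  using max_degree_less by auto

definition improvable :: "('a set \<Rightarrow> nat) \<Rightarrow> bool" where
  "improvable f \<longleftrightarrow>
     (\<exists>g. kempe_reachable f g \<and> proper g \<and> num_high_edges g < num_high_edges f)"

lemma improvable_if_reachable:
  "kempe_reachable f g \<Longrightarrow> num_high_edges g \<le> num_high_edges f \<Longrightarrow> improvable g \<Longrightarrow> improvable f"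
  unfolding improvable_def by (meson order.strict_trans2 rtranclp_trans)

definition fan :: "('a set \<Rightarrow> nat) \<Rightarrow> 'a \<Rightarrow> 'a list \<Rightarrow> bool" where
  "fan f x ys \<longleftrightarrow> ys \<noteq> [] \<and> distinct ys \<and> (\<forall>y\<in>set ys. {x, y} \<in> E) \<and> \<Delta> < f {x, hd ys}
     \<and> (\<forall>i. 0 < i \<and> i < length ys \<longrightarrow> f {x, ys ! i} \<in> missing f (ys ! (i - 1)))"

lemma fanD:
  assumes "fan f x ys"
  shows fan_nonempty: "ys \<noteq> []" and fan_distinct: "distinct ys"
    and fan_edge: "y \<in> set ys \<Longrightarrow> {x, y} \<in> E"
    and fan_first_high: "\<Delta> < f {x, hd ys}"
    and fan_missing: "0 < i \<Longrightarrow> i < length ys \<Longrightarrow> f {x, ys ! i} \<in> missing f (ys ! (i - 1))"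
  using assms unfolding fan_def by blast+

lemma fan_colours_distinct:
  assumes fan: "fan f x ys" and proper: "proper f"
    and "i < length ys" "j < length ys" "i \<noteq> j"
  shows "f {x, ys ! i} \<noteq> f {x, ys ! j}"
proof -
  have "ys ! i \<noteq> ys ! j"
    using nth_eq_iff_index_eq[OF fan_distinct[OF fan]] assms(3-5) by simp
  then have "{x, ys ! i} \<noteq> {x, ys ! j}"
    by (metis doubleton_eq_iff)
  moreover have "{x, ys ! i} \<in> E" "{x, ys ! j} \<in> E"
    using fan_edge[OF fan] assms(3,4) by simp_all
  ultimately show ?thesis
    using proper_edge_coloring_eq_at_vertex[OF proper, of _ _ x] by blast
qed

lemma fan_length_le:
  assumes "fan f x ys"
  shows "length ys \<le> card V"
proof -
  have "set ys \<subseteq> V"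
    using fan_edge[OF assms] vertex_of_edge by blast
  then show ?thesis
    using card_mono[OF finite_V] distinct_card[OF fan_distinct[OF assms]] by metis
qed

lemma fan_snoc:
  assumes "fan f x ys" "{x, z} \<in> E" "z \<notin> set ys" "f {x, z} \<in> missing f (last ys)"
  shows "fan f x (ys @ [z])"
proof -
  have "f {x, (ys @ [z]) ! i} \<in> missing f ((ys @ [z]) ! (i - 1))"
    if "0 < i" "i < length (ys @ [z])" for i
  proof (cases "i < length ys")
    case True
    then have "i - 1 < length ys"
      by simp
    with True show ?thesis
      using fan_missing[OF assms(1) that(1)] by (simp add: nth_append)
  next
    case False
    then have "i = length ys"
      using that by simp
    then show ?thesis
      using assms(4) fan_nonempty[OF assms(1)] by (simp add: nth_append last_conv_nth)
  qed
  with assms show ?thesis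
    unfolding fan_def by auto
qed

text \<open>The fan edge at position \<open>j\<close> is exempt from the colour condition and is checked
  directly; \<open>j = 0\<close> exempts nothing.\<close>
lemma fan_kempe_swap:
  fixes f :: "'a set \<Rightarrow> nat" and a b :: nat and v :: 'a
  defines "g \<equiv> kempe_swap f a b v"
  assumes ys: "ys \<noteq> []" "distinct ys" "\<forall>y\<in>set ys. {x, y} \<in> E" "\<Delta> < g {x, hd ys}"
    and others: "\<And>i. 0 < i \<Longrightarrow> i < length ys \<Longrightarrow> i \<noteq> j \<Longrightarrow>
      f {x, ys ! i} \<in> missing f (ys ! (i - 1)) \<and> f {x, ys ! i} \<noteq> a \<and> f {x, ys ! i} \<noteq> b"
    and at_j: "0 < j \<Longrightarrow> j < length ys \<Longrightarrow> g {x, ys ! j} \<in> missing g (ys ! (j - 1))"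
  shows "fan g x ys"
proof -
  have "g {x, ys ! i} \<in> missing g (ys ! (i - 1))" if i: "0 < i" "i < length ys" for i
  proof (cases "i = j")
    case True
    then show ?thesis
      using at_j i by simp
  next
    case False
    with others[OF i] show ?thesis
      unfolding g_def using kempe_swap_eq_other_colour missing_kempe_swap_other_colour by metis
  qed
  with ys show ?thesis
    unfolding fan_def by blast
qed

lemma missing_if_same_colour_class:
  "(\<And>e. g e = d \<longleftrightarrow> f e = d) \<Longrightarrow> d \<in> missing g u \<longleftrightarrow> d \<in> missing f u"
  unfolding missing_iff by simp

text \<open>Swapping the colours of the first two fan edges along their common Kempe chain moves
  the high colour to the second fan edge; the chain ends at \<open>y\<^sub>0\<close>, which misses the low
  colour, so no high edges are created.\<close>
lemma fan_shift:
  assumes fan: "fan f x (y\<^sub>0 # y\<^sub>1 # ys)" and proper: "proper f"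
  obtains g where "interchange E t f g" "proper g" "num_high_edges g \<le> num_high_edges f"
    "fan g x (y\<^sub>1 # ys)" "g {x, y\<^sub>1} = f {x, y\<^sub>0}" "\<And>d e. d \<in> missing f x \<Longrightarrow> g e = d \<longleftrightarrow> f e = d"
proof -
  let ?a = "f {x, y\<^sub>1}" and ?c = "f {x, y\<^sub>0}"
  let ?K = "kempe_edges f ?a ?c x" and ?g = "kempe_swap f ?a ?c x"
  have e: "{x, y\<^sub>0} \<in> E" "{x, y\<^sub>1} \<in> E"
    using fan_edge[OF fan] by simp_all
  have "?a \<in> missing f y\<^sub>0"
    using fan_missing[OF fan, of 1] by simp
  then have a_low: "?a \<in> {1..\<Delta>}" and no_a: "\<nexists>e. e \<in> E \<and> y\<^sub>0 \<in> e \<and> f e = ?a"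
    unfolding missing_iff by blast+
  have c_high: "\<Delta> < ?c"
    using fan_first_high[OF fan] by simp
  have K: "{x, y\<^sub>0} \<in> ?K" "{x, y\<^sub>1} \<in> ?K"
    using e by (auto intro: edge_at_start_in_kempe_edges)
  have palette: "?a \<in> {1..t}" "?c \<in> {1..t}"
    using low_colour_in_palette[OF a_low] proper_edge_coloring_range[OF proper e(1)] .
  have swapped: "?g {x, y\<^sub>0} = ?a" "?g {x, y\<^sub>1} = ?c"
    using K by (simp_all add: kempe_swap_inside)
  have y\<^sub>0: "y\<^sub>0 \<in> kempe_vertices f ?a ?c x"
    using kempe_edge_subset_vertices[OF K(1)] by blast
  have "num_high_edges ?g \<le> num_high_edges f"
    using a_low c_high no_a e(1)
    by (intro num_high_edges_kempe_swap_le[OF proper _ _ y\<^sub>0, of "{x, y\<^sub>0}"]) auto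
  moreover have "fan ?g x (y\<^sub>1 # ys)"
  proof (rule fan_kempe_swap[where j = 0])
    fix i assume i: "0 < i" "i < length (y\<^sub>1 # ys)"
    let ?y = "(y\<^sub>1 # ys) ! i"
    have "f {x, ?y} \<in> missing f ((y\<^sub>1 # ys) ! (i - 1))"
      using fan_missing[OF fan, of "Suc i"] i by simp
    moreover have "f {x, ?y} \<noteq> ?a"
      using fan_colours_distinct[OF fan proper, of "Suc i" 1] i by simp
    ultimately show "f {x, ?y} \<in> missing f ((y\<^sub>1 # ys) ! (i - 1)) \<and> f {x, ?y} \<noteq> ?a
        \<and> f {x, ?y} \<noteq> ?c"
      using c_high unfolding missing_iff by auto
  qed (use fan_distinct[OF fan] fan_edge[OF fan] swapped c_high in auto)
  moreover have "?g e = d \<longleftrightarrow> f e = d" if "d \<in> missing f x" for d e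
    using that missing_neq_colour[OF that e(2)] c_high kempe_swap_eq_other_colour
    unfolding missing_iff by (metis atLeastAtMost_iff leD insertI1)
  ultimately show ?thesis
    using that[of ?g] interchange_kempe_swap[OF palette] K proper_kempe_swap[OF proper palette]
      swapped by blast
qed

lemma fan_rotation:
  assumes "fan f x ys" "proper f"
  shows "\<exists>g. kempe_reachable f g \<and> proper g \<and> num_high_edges g \<le> num_high_edges f
    \<and> g {x, last ys} = f {x, hd ys} \<and> (\<forall>d\<in>missing f x. \<forall>e. g e = d \<longleftrightarrow> f e = d)"
  using assms
proof (induction ys arbitrary: f rule: induct_list012)
  case 1
  then show ?case
    by (simp add: fan_def)
next
  case (2 y)
  then show ?case
    by auto
next
  case (3 y\<^sub>0 y\<^sub>1 ys)
  obtain g\<^sub>1 where g\<^sub>1: "interchange E t f g\<^sub>1" "proper g\<^sub>1" "num_high_edges g\<^sub>1 \<le> num_high_edges f"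
    "fan g\<^sub>1 x (y\<^sub>1 # ys)" "g\<^sub>1 {x, y\<^sub>1} = f {x, y\<^sub>0}"
    and same: "\<And>d e. d \<in> missing f x \<Longrightarrow> g\<^sub>1 e = d \<longleftrightarrow> f e = d"
    using fan_shift[OF "3.prems"] by blast
  from "3.IH"(2)[OF g\<^sub>1(4,2)] obtain g where g: "kempe_reachable g\<^sub>1 g" "proper g"
    "num_high_edges g \<le> num_high_edges g\<^sub>1" "g {x, last (y\<^sub>1 # ys)} = g\<^sub>1 {x, y\<^sub>1}"
    and same': "\<forall>d\<in>missing g\<^sub>1 x. \<forall>e. g e = d \<longleftrightarrow> g\<^sub>1 e = d"
    by auto
  have "\<forall>d\<in>missing f x. \<forall>e. g e = d \<longleftrightarrow> f e = d"
    using same same' missing_if_same_colour_class by metis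
  with g g\<^sub>1 show ?case
    by (auto intro: converse_rtranclp_into_rtranclp)
qed

lemma improvable_if_missing_at_both_ends:
  assumes proper: "proper f" and xw: "{x, w} \<in> E" "\<Delta> < f {x, w}"
    and d: "d \<in> missing f x" "d \<in> missing f w"
  shows "improvable f"
proof -
  let ?c = "f {x, w}"
  have d_low: "d \<in> {1..\<Delta>}"
    using d(1) unfolding missing_iff by blast
  have "e = {x, w}" if "e \<in> E" "x \<in> e \<or> w \<in> e" "f e = d \<or> f e = ?c" for e
  proof -
    have "f e = ?c"
      using that missing_neq_colour[OF d(1)] missing_neq_colour[OF d(2)] by blast
    with that xw(1) show ?thesis
      using proper_edge_coloring_eq_at_vertex[OF proper] by blast
  qed
  then have K: "kempe_edges f d ?c x = {{x, w}}"
    using xw(1) by (intro kempe_edges_single_edge) auto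
  have palette: "d \<in> {1..t}" "?c \<in> {1..t}"
    using low_colour_in_palette[OF d_low] proper_edge_coloring_range[OF proper xw(1)] .
  have "{e\<in>kempe_edges f d ?c x. f e = ?c} = {{x, w}}" "{e\<in>kempe_edges f d ?c x. f e = d} = {}"
    using K d_low xw(2) by auto
  then have "num_high_edges (kempe_swap f d ?c x) + 1 = num_high_edges f"
    using num_high_edges_kempe_swap_balance[of d ?c f x] d_low xw(2) by (simp only:) simp
  then show ?thesis
    unfolding improvable_def using interchange_kempe_swap[OF palette] K
      proper_kempe_swap[OF proper palette]
    by (metis empty_not_insert less_add_one r_into_rtranclp)
qed

lemma improvable_if_fan_closes:
  assumes fan: "fan f x ys" and proper: "proper f"
    and d: "d \<in> missing f x" "d \<in> missing f (last ys)"
  shows "improvable f"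
proof -
  obtain g where g: "kempe_reachable f g" "proper g" "num_high_edges g \<le> num_high_edges f"
    "g {x, last ys} = f {x, hd ys}" and "\<forall>e. g e = d \<longleftrightarrow> f e = d"
    using fan_rotation[OF fan proper] d(1) by blast
  then have "d \<in> missing g x" "d \<in> missing g (last ys)"
    using d missing_if_same_colour_class by blast+
  moreover have "{x, last ys} \<in> E"
    using fan_edge[OF fan] fan_nonempty[OF fan] by simp
  ultimately have "improvable g"
    using g(2,4) fan_first_high[OF fan] improvable_if_missing_at_both_ends[of g x "last ys" d]
    by simp
  with g(1,3) show ?thesis
    by (rule improvable_if_reachable)
qed

text \<open>Both \<open>p\<close> and \<open>q\<close> miss \<open>d\<close> and \<open>x\<close> misses \<open>c\<close>, so each of them would be an end of the
  chain; a chain has only two ends.\<close>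
lemma kempe_chain_misses_third_end:
  assumes proper: "proper f" and c: "c \<in> missing f x" and xz: "{x, z} \<in> E" "f {x, z} = d"
    and d: "d \<in> missing f p" "d \<in> missing f q"
    and p: "p \<in> kempe_vertices f c d x" and neq: "p \<noteq> x" "q \<noteq> x" "p \<noteq> q"
  shows "q \<notin> kempe_vertices f c d x"
proof
  assume q: "q \<in> kempe_vertices f c d x"
  have end_deg: "card {e\<in>kempe_edges f c d x. u \<in> e} = 1"
    if u: "u \<in> kempe_vertices f c d x" "u \<noteq> x" "d \<in> missing f u" for u
  proof -
    obtain e where "e \<in> kempe_edges f c d x" "u \<in> e"
      using kempe_vertex_in_kempe_edge u(1,2) by blast
    then show ?thesis
      using u(3) by (intro kempe_degree_eq_1[OF proper]) (auto simp: missing_iff)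
  qed
  have "card {e\<in>kempe_edges f c d x. x \<in> e} = 1"
    using c xz by (intro kempe_degree_eq_1[OF proper, of "{x, z}"])
      (auto simp: missing_iff intro: edge_at_start_in_kempe_edges)
  from kempe_chain_at_most_two_ends[OF proper start_in_kempe_vertices p q
      neq(1)[symmetric] neq(2)[symmetric] neq(3) this end_deg[OF p neq(1) d(1)]
      end_deg[OF q neq(2) d(2)]]
  show False .
qed

lemma improvable_if_low_kempe_swap_improvable:
  assumes "proper f" "a \<in> {1..\<Delta>}" "b \<in> {1..\<Delta>}" "kempe_edges f a b v \<noteq> {}"
    and "improvable (kempe_swap f a b v)"
  shows "improvable f"
proof (rule improvable_if_reachable)
  show "kempe_reachable f (kempe_swap f a b v)"
    using interchange_kempe_swap[OF low_colour_in_palette low_colour_in_palette assms(4)] assms(2,3)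
    by blast
  show "num_high_edges (kempe_swap f a b v) \<le> num_high_edges f"
    using assms(2,3) num_high_edges_kempe_swap_low by simp
qed (rule assms(5))

lemma kempe_swap_at_fan_centre:
  assumes fan: "fan f x ys" and proper: "proper f" and c: "c \<in> missing f x"
    and j: "0 < j" "j < length ys" "f {x, ys ! j} = d"
  shows "proper (kempe_swap f c d x)" and "d \<in> missing (kempe_swap f c d x) x"
    and "\<Delta> < kempe_swap f c d x {x, hd ys}"
proof -
  have d: "d \<in> missing f (ys ! (j - 1))"
    using fan_missing[OF fan j(1,2)] j(3) by simp
  have "{x, ys ! j} \<in> E"
    using fan_edge[OF fan] j(2) by simp
  then have low: "c \<in> {1..\<Delta>}" "d \<in> {1..\<Delta>}" "c \<noteq> d"
    using c d missing_neq_colour[OF c] j(3) unfolding missing_iff by auto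
  then show "proper (kempe_swap f c d x)"
    using proper_kempe_swap[OF proper] low_colour_in_palette by simp
  show "d \<in> missing (kempe_swap f c d x) x"
    using missing_kempe_swap_at_vertex[OF start_in_kempe_vertices] low c by simp
  show "\<Delta> < kempe_swap f c d x {x, hd ys}"
    using fan_first_high[OF fan] low
      kempe_swap_eq_other_colour[of "f {x, hd ys}" c d f x "{x, hd ys}"] by auto
qed

lemma improvable_kempe_swap_if_fan_prefix_off_chain:
  assumes fan: "fan f x ys" and proper: "proper f" and c: "c \<in> missing f x"
    and j: "0 < j" "j < length ys" "f {x, ys ! j} = d"
    and off: "ys ! (j - 1) \<notin> kempe_vertices f c d x"
  shows "improvable (kempe_swap f c d x)"
proof -
  let ?g = "kempe_swap f c d x"
  note swap = kempe_swap_at_fan_centre[OF fan proper c j]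
  have "fan ?g x (take j ys)"
  proof (rule fan_kempe_swap[where j = j])
    fix i assume i: "0 < i" "i < length (take j ys)" "i \<noteq> j"
    then have "take j ys ! i = ys ! i" "take j ys ! (i - 1) = ys ! (i - 1)"
      by (simp_all add: nth_take less_imp_diff_less)
    moreover have "{x, ys ! i} \<in> E"
      using fan_edge[OF fan] i by simp
    ultimately show "f {x, take j ys ! i} \<in> missing f (take j ys ! (i - 1))
        \<and> f {x, take j ys ! i} \<noteq> c \<and> f {x, take j ys ! i} \<noteq> d"
      using i fan_missing[OF fan] fan_colours_distinct[OF fan proper, of i j] j
        missing_neq_colour[OF c] by simp
  qed (use fan_distinct[OF fan] fan_edge[OF fan] swap(3) j(1) fan_nonempty[OF fan] in
    \<open>auto dest: in_set_takeD\<close>)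
  moreover have "last (take j ys) = ys ! (j - 1)"
    using j fan_nonempty[OF fan] by (simp add: last_conv_nth)
  then have "d \<in> missing ?g (last (take j ys))"
    using missing_kempe_swap_off_vertices[OF off] fan_missing[OF fan j(1,2)] j(3) by simp
  ultimately show ?thesis
    using improvable_if_fan_closes swap(1,2) by blast
qed

lemma improvable_kempe_swap_if_fan_prefix_on_chain:
  assumes fan: "fan f x ys" and proper: "proper f" and c: "c \<in> missing f x"
    and j: "0 < j" "j < length ys" "f {x, ys ! j} = d" and d: "d \<in> missing f (last ys)"
    and on: "ys ! (j - 1) \<in> kempe_vertices f c d x"
  shows "improvable (kempe_swap f c d x)"
proof -
  let ?g = "kempe_swap f c d x"
  note swap = kempe_swap_at_fan_centre[OF fan proper c j]
  have prev: "d \<in> missing f (ys ! (j - 1))"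
    using fan_missing[OF fan j(1,2)] j(3) by simp
  have "ys ! (j - 1) \<in> set ys" "last ys \<in> set ys"
    using j fan_nonempty[OF fan] by simp_all
  then have "ys ! (j - 1) \<noteq> x" "last ys \<noteq> x"
    using edge_ends_neq fan_edge[OF fan] by metis+
  moreover have "ys ! (j - 1) \<noteq> last ys"
    using j fan_distinct[OF fan] fan_nonempty[OF fan]
    by (simp add: last_conv_nth nth_eq_iff_index_eq)
  ultimately have "last ys \<notin> kempe_vertices f c d x"
    using fan_edge[OF fan] j(2,3)
    by (intro kempe_chain_misses_third_end[OF proper c _ _ prev d on]) auto
  then have "d \<in> missing ?g (last ys)"
    using missing_kempe_swap_off_vertices d by simp
  moreover have "fan ?g x ys"
  proof (rule fan_kempe_swap[where j = j])
    have "{x, ys ! j} \<in> E"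
      using fan_edge[OF fan] j(2) by simp
    then have "c \<noteq> d" "c \<in> {1..\<Delta>}" "d \<in> {1..\<Delta>}"
      using c prev j(3) missing_neq_colour[OF c] unfolding missing_iff by auto
    moreover have "{x, ys ! j} \<in> kempe_edges f c d x"
      using fan_edge[OF fan] j(2,3) by (auto intro: edge_at_start_in_kempe_edges)
    ultimately show "?g {x, ys ! j} \<in> missing ?g (ys ! (j - 1))"
      using missing_kempe_swap_at_vertex[OF on] prev j(3) by (simp add: kempe_swap_inside)
  qed (use fan_distinct[OF fan] fan_edge[OF fan] swap(3) fan_nonempty[OF fan] fan_missing[OF fan]
      fan_colours_distinct[OF fan proper _ j(2)] j(3) missing_neq_colour[OF c] in auto)
  ultimately show ?thesis
    using improvable_if_fan_closes swap(1,2) by blast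
qed

text \<open>Swap \<open>d\<close> with a colour \<open>c\<close> missing at \<open>x\<close> along the chain from
  \<open>x\<close>. If the chain avoids the fan vertex before \<open>ys ! j\<close>, the fan truncated there closes
  with \<open>d\<close>; otherwise the chain avoids the last fan vertex, and the whole fan closes with
  \<open>d\<close>.\<close>
lemma improvable_if_fan_colour_present:
  assumes fan: "fan f x ys" and proper: "proper f" and d: "d \<in> missing f (last ys)"
    and j: "j < length ys" "f {x, ys ! j} = d"
  shows "improvable f"
proof -
  have "missing f x \<noteq> {}"
    using fan_first_high[OF fan] fan_edge[OF fan] fan_nonempty[OF fan]
    by (intro missing_nonempty_at_high_edge[of "{x, hd ys}"]) auto
  then obtain c where c: "c \<in> missing f x"
    by blast
  have "j \<noteq> 0"
  proof
    assume "j = 0"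
    then have "f {x, hd ys} = d"
      using j(2) fan_nonempty[OF fan] by (simp add: hd_conv_nth)
    with fan_first_high[OF fan] d show False
      unfolding missing_iff by simp
  qed
  then have j': "0 < j" "j < length ys" "f {x, ys ! j} = d"
    using j by simp_all
  have "improvable (kempe_swap f c d x)"
    using improvable_kempe_swap_if_fan_prefix_off_chain[OF fan proper c j']
      improvable_kempe_swap_if_fan_prefix_on_chain[OF fan proper c j' d] by blast
  moreover have "{x, ys ! j} \<in> kempe_edges f c d x"
    using fan_edge[OF fan] j by (auto intro: edge_at_start_in_kempe_edges)
  ultimately show ?thesis
    using c d improvable_if_low_kempe_swap_improvable[OF proper] unfolding missing_iff by blast
qed

definition high_edge_movable :: "('a set \<Rightarrow> nat) \<Rightarrow> 'a \<Rightarrow> 'a set \<Rightarrow> bool" where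
  "high_edge_movable f x Z \<longleftrightarrow>
     (\<exists>g z. kempe_reachable f g \<and> proper g \<and> num_high_edges g \<le> num_high_edges f \<and>
        {x, z} \<in> E \<and> z \<notin> Z \<and> z \<in> max_deg_vertices V E \<and> \<Delta> < g {x, z})"

text \<open>A fan vertex missing no colour has maximum degree; rotating the fan onto it moves the
  high colour to an edge between \<open>x\<close> and a vertex of \<open>G\<^sub>\<Delta>\<close>.\<close>
lemma high_edge_movable_if_fan_end_saturated:
  assumes fan: "fan f x (ys @ [z])" and proper: "proper f" and "missing f z = {}"
  shows "high_edge_movable f x (set ys)"
proof -
  obtain g where "kempe_reachable f g" "proper g" "num_high_edges g \<le> num_high_edges f"
    "g {x, z} = f {x, hd (ys @ [z])}"
    using fan_rotation[OF fan proper] by auto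
  moreover have "{x, z} \<in> E" "z \<notin> set ys"
    using fan_edge[OF fan] fan_distinct[OF fan] by auto
  moreover have "z \<in> max_deg_vertices V E"
    using \<open>{x, z} \<in> E\<close> \<open>missing f z = {}\<close> degree_eq_max_degree_if_none_missing vertex_of_edge
    unfolding max_deg_vertices_def by blast
  ultimately show ?thesis
    unfolding high_edge_movable_def using fan_first_high[OF fan]
    by (intro exI[of _ g] exI[of _ z]) auto
qed

lemma improvable_or_movable_if_fan:
  assumes "fan f x ys" "proper f" "missing f (last ys) \<noteq> {}"
  shows "improvable f \<or> high_edge_movable f x (set ys)"
  using assms
proof (induction "card V - length ys" arbitrary: ys rule: less_induct)
  case less
  note fan = less.prems(1) and proper = less.prems(2)
  obtain d where d: "d \<in> missing f (last ys)"
    using less.prems(3) by blast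
  show ?case
  proof (cases "d \<in> missing f x")
    case True
    then show ?thesis
      using improvable_if_fan_closes[OF fan proper True d] by blast
  next
    case False
    with d obtain z where z: "{x, z} \<in> E" "f {x, z} = d"
      unfolding missing_iff by (blast elim: edge_at_vertexE)
    show ?thesis
    proof (cases "z \<in> set ys")
      case True
      then obtain j where "j < length ys" "ys ! j = z"
        by (metis in_set_conv_nth)
      then show ?thesis
        using improvable_if_fan_colour_present[OF fan proper d] z(2) by blast
    next
      case False
      have fan': "fan f x (ys @ [z])"
        using fan_snoc[OF fan z(1) False] z(2) d by simp
      have shorter: "card V - length (ys @ [z]) < card V - length ys"
        using fan_length_le[OF fan'] by simp
      show ?thesis
      proof (cases "missing f z = {}")
        case True
        then show ?thesis
          using high_edge_movable_if_fan_end_saturated[OF fan' proper] by blast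
      next
        case False
        then have "improvable f \<or> high_edge_movable f x (set (ys @ [z]))"
          using less.hyps[OF shorter fan' proper] by simp
        then show ?thesis
          unfolding high_edge_movable_def by auto
      qed
    qed
  qed
qed

lemma improvable_or_movable_at_high_edge:
  assumes "proper f" "{x, y} \<in> E" "\<Delta> < f {x, y}"
  shows "improvable f \<or> high_edge_movable f x {y}"
proof -
  have "fan f x [y]"
    using assms unfolding fan_def by auto
  moreover have "missing f y \<noteq> {}"
    using assms by (intro missing_nonempty_at_high_edge[of "{x, y}"]) auto
  ultimately show ?thesis
    using improvable_or_movable_if_fan assms(1) by fastforce
qed

text \<open>A high edge leaving the last vertex of a path in \<open>G\<^sub>\<Delta>\<close> can either be eliminated or
  moved one step further along a longer path; acyclicity keeps the path simple, so this
  terminates.\<close>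
lemma improvable_along_max_degree_path:
  assumes acyclic: "acyclic_graph (max_deg_vertices V E) (induced_edges E (max_deg_vertices V E))"
    and "ws \<noteq> []" "distinct ws" "set ws \<subseteq> max_deg_vertices V E"
      "is_walk (induced_edges E (max_deg_vertices V E)) ws"
      "butlast ws \<noteq> [] \<Longrightarrow> p = last (butlast ws)"
    and "proper f" "{last ws, p} \<in> E" "\<Delta> < f {last ws, p}"
  shows "improvable f"
  using assms(2-)
proof (induction "card (max_deg_vertices V E) - length ws" arbitrary: ws f p rule: less_induct)
  case less
  let ?D = "max_deg_vertices V E" and ?w = "last ws"
  from improvable_or_movable_at_high_edge[OF less.prems(6-8)] show ?case
  proof
    assume "high_edge_movable f ?w {p}"
    then obtain g z where g: "kempe_reachable f g" "proper g" "num_high_edges g \<le> num_high_edges f"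
      and z: "{?w, z} \<in> E" "z \<noteq> p" "z \<in> ?D" "\<Delta> < g {?w, z}"
      unfolding high_edge_movable_def by blast
    have wz: "{?w, z} \<in> induced_edges E ?D"
      using z less.prems(1,3) unfolding induced_edges_def by auto
    have "z \<notin> set ws"
      using z(2) edge_ends_neq[OF z(1)] less.prems(5)
      by (intro acyclic_walk_extension[OF acyclic less.prems(2-4) wz]) auto
    then have shorter: "card ?D - length (ws @ [z]) < card ?D - length ws"
      using less.prems(2-4) z(3) finite_V card_mono[of ?D "set (ws @ [z])"]
      by (simp add: max_deg_vertices_def distinct_card)
    have "improvable g"
      using \<open>z \<notin> set ws\<close> less.prems(1-4) z g(2) wz
      by (intro less.hyps[OF shorter, of ?w])
        (auto simp: insert_commute intro: is_walk_snoc)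
    with g(1,3) show ?thesis
      by (rule improvable_if_reachable)
  qed
qed

lemma improvable_if_high_edge:
  assumes acyclic: "acyclic_graph (max_deg_vertices V E) (induced_edges E (max_deg_vertices V E))"
    and proper: "proper f" and "0 < num_high_edges f"
  shows "improvable f"
proof -
  obtain x y where xy: "{x, y} \<in> E" "\<Delta> < f {x, y}"
    using \<open>0 < num_high_edges f\<close> unfolding num_high_edges_def
    by (metis (mono_tags, lifting) card.empty edgeE empty_Collect_eq less_irrefl)
  from improvable_or_movable_at_high_edge[OF proper xy] show ?thesis
  proof
    assume "high_edge_movable f x {y}"
    then obtain g z where g: "kempe_reachable f g" "proper g" "num_high_edges g \<le> num_high_edges f"
      and z: "{x, z} \<in> E" "z \<in> max_deg_vertices V E" "\<Delta> < g {x, z}"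
      unfolding high_edge_movable_def by blast
    have "improvable g"
      using z g(2) by (intro improvable_along_max_degree_path[OF acyclic, of "[z]" x])
        (auto simp: is_walk_def insert_commute)
    with g(1,3) show ?thesis
      by (rule improvable_if_reachable)
  qed
qed

lemma reachable_max_degree_coloring:
  assumes acyclic: "acyclic_graph (max_deg_vertices V E) (induced_edges E (max_deg_vertices V E))"
    and "proper f"
  shows "\<exists>g. kempe_reachable f g \<and> proper_edge_coloring E \<Delta> g"
  using \<open>proper f\<close>
proof (induction "num_high_edges f" arbitrary: f rule: less_induct)
  case less
  show ?case
  proof (cases "num_high_edges f = 0")
    case True
    then have "\<forall>e\<in>E. f e \<le> \<Delta>"
      using finite_E unfolding num_high_edges_def by auto
    then have "proper_edge_coloring E \<Delta> f"
      using less.prems unfolding proper_edge_coloring_def by auto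
    then show ?thesis
      by blast
  next
    case False
    then obtain g where "kempe_reachable f g" "proper g" "num_high_edges g < num_high_edges f"
      using improvable_if_high_edge[OF acyclic less.prems] unfolding improvable_def by blast
    with less.hyps show ?thesis
      by (meson rtranclp_trans)
  qed
qed

end

theorem proposition3p1:
  fixes V :: "'a set" and E :: "'a set set" and t :: nat and f :: "'a set \<Rightarrow> nat"
  assumes "simple_graph V E"
    and "acyclic_graph (max_deg_vertices V E) (induced_edges E (max_deg_vertices V E))"
    and "t > max_degree V E"
    and "proper_edge_coloring E t f"
  shows "\<exists>g. (interchange E t)\<^sup>*\<^sup>* f g \<and> proper_edge_coloring E (max_degree V E) g"
proof -
  interpret recolouring V E t
    using assms(1,3) by unfold_locales
  show ?thesis
    using reachable_max_degree_coloring[OF assms(2,4)] .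
qed

end
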